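(* Let $f:\mathbb{R}^n\to(-\infty,+\infty]$ be a proper closed convex function, let $\mathcal{M}$ be a $C^1$-smooth embedded submanifold containing $\bar x$, and suppose $f$ is $C^1$-partly smooth around $\bar x$ relative to $\mathcal{M}$ with $0\in\operatorname{ri}\partial f(\bar x)$. Then for all $x\in\mathcal{M}$ near $\bar x$, $\|\nabla_{\mathcal{M}}f(x)\|=\operatorname{dist}(0,\partial f(x))$, and moreover $$\liminf_{x\to\bar x,\;x\notin\mathcal{M},\;y\in\partial f(x)}\|y\|>0.$$
   Context: Partial smoothness: $f$ is partly smooth at a point $x\in\mathcal M$ relative to a $C^p$ manifold $\mathcal{M}$ (for all subgradients) if: (Regularity) $\hat\partial f(z)=\partial f(z)\neq\varnothing$ for all $z\in\mathcal{M}$ near $x$; (Restricted smoothness) $f|_{\mathcal{M}}$ is $C^p$-smooth around $x$; (Sharpness) $\operatorname{par}\partial f(x)$ (the subspace parallel to the affine hull of $\partial f(x)$) equals the normal space $N_x\mathcal{M}$; (Inner semicontinuity) for every $y\in\partial f(x)$ and every sequence $x_r\to x$ in $\mathcal{M}$ there exist $y_r\in\partial f(x_r)$ with $y_r\to y$. "$C^1$-partly smooth around $\bar x$ relative to $\mathcal{M}$" means this holds with $p=1$ at every point of $\mathcal M$ near $\bar x$. $\nabla_{\mathcal M}f(x)$ is the Riemannian gradient of $f|_{\mathcal M}$ for the metric induced from $\mathbb{R}^n$, i.e. $P_{T_x\mathcal M}\nabla\tilde f(x)$ for a local smooth extension $\tilde f$. *)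

theory Defs
  imports "HOL-Analysis.Analysis"
begin

text \<open>f : R^n -> (-inf,+inf] is modelled as 'a => ereal with f never -inf.\<close>

definition proper_fun :: "('a \<Rightarrow> ereal) \<Rightarrow> bool" where
  "proper_fun f \<longleftrightarrow> (\<forall>x. f x \<noteq> -\<infinity>) \<and> (\<exists>x. f x \<noteq> \<infinity>)"

definition epigraph :: "('a \<Rightarrow> ereal) \<Rightarrow> ('a \<times> real) set" where
  "epigraph f = {(x, t). f x \<le> ereal t}"

definition convex_fun :: "('a::real_vector \<Rightarrow> ereal) \<Rightarrow> bool" where
  "convex_fun f \<longleftrightarrow> convex (epigraph f)"

definition closed_fun :: "('a::topological_space \<Rightarrow> ereal) \<Rightarrow> bool" where
  "closed_fun f \<longleftrightarrow> closed (epigraph f)"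

definition frechet_subdiff :: "('a::real_inner \<Rightarrow> ereal) \<Rightarrow> 'a \<Rightarrow> 'a set" where
  "frechet_subdiff f x = {y. \<bar>f x\<bar> \<noteq> \<infinity> \<and>
     (\<forall>\<epsilon>>0. \<exists>\<delta>>0. \<forall>z. norm (z - x) < \<delta> \<longrightarrow>
        f z \<ge> f x + ereal (y \<bullet> (z - x) - \<epsilon> * norm (z - x)))}"

definition subdiff :: "('a::real_inner \<Rightarrow> ereal) \<Rightarrow> 'a \<Rightarrow> 'a set" where
  "subdiff f x = {y. \<bar>f x\<bar> \<noteq> \<infinity> \<and>
     (\<exists>X Y. X \<longlonglongrightarrow> x \<and> (\<lambda>k. f (X k)) \<longlonglongrightarrow> f x \<and>
            (\<forall>k. Y k \<in> frechet_subdiff f (X k)) \<and> Y \<longlonglongrightarrow> y)}"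

text \<open>Subspace parallel to the affine hull of S.\<close>
definition par :: "'a::real_vector set \<Rightarrow> 'a set" where
  "par S = span {a - b | a b. a \<in> S \<and> b \<in> S}"

text \<open>M is a C^1 embedded submanifold: around each point of M it is the zero set of a
  C^1 submersion F : U -> W (W a linear subspace of the ambient space, i.e. R^k).\<close>
definition C1_submanifold :: "'a::euclidean_space set \<Rightarrow> bool" where
  "C1_submanifold M \<longleftrightarrow> (\<forall>x\<in>M. \<exists>U (F::'a \<Rightarrow> 'a) F' W.
      open U \<and> x \<in> U \<and> subspace W \<and>
      (\<forall>z\<in>U. (F has_derivative blinfun_apply (F' z)) (at z)) \<and> continuous_on U F' \<and>
      (\<forall>z\<in>U. F z \<in> W) \<and> range (blinfun_apply (F' x)) = W \<and>
      M \<inter> U = {z\<in>U. F z = 0})"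

definition tangent_space :: "'a::euclidean_space set \<Rightarrow> 'a \<Rightarrow> 'a set" where
  "tangent_space M x = {v. \<exists>(\<gamma>::real \<Rightarrow> 'a) e. e > 0 \<and> (\<forall>t\<in>{-e<..<e}. \<gamma> t \<in> M) \<and>
      \<gamma> 0 = x \<and> (\<gamma> has_vector_derivative v) (at 0)}"

definition normal_space :: "'a::euclidean_space set \<Rightarrow> 'a \<Rightarrow> 'a set" where
  "normal_space M x = {w. \<forall>v\<in>tangent_space M x. w \<bullet> v = 0}"

definition C1_on_with_grad :: "'a::euclidean_space set \<Rightarrow> ('a \<Rightarrow> real) \<Rightarrow> ('a \<Rightarrow> 'a) \<Rightarrow> bool" where
  "C1_on_with_grad U ft G \<longleftrightarrow> open U \<and>
     (\<forall>z\<in>U. (ft has_derivative (\<lambda>h. G z \<bullet> h)) (at z)) \<and> continuous_on U G"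

definition local_C1_extension ::
  "('a::euclidean_space \<Rightarrow> ereal) \<Rightarrow> 'a set \<Rightarrow> 'a \<Rightarrow> 'a set \<Rightarrow> ('a \<Rightarrow> real) \<Rightarrow> ('a \<Rightarrow> 'a) \<Rightarrow> bool" where
  "local_C1_extension f M x U ft G \<longleftrightarrow>
     C1_on_with_grad U ft G \<and> x \<in> U \<and> (\<forall>z\<in>M \<inter> U. f z = ereal (ft z))"

text \<open>Riemannian gradient: projection onto T_x M of the gradient of a local C^1 extension
  (independent of the chosen extension).\<close>
definition riem_grad :: "('a::euclidean_space \<Rightarrow> ereal) \<Rightarrow> 'a set \<Rightarrow> 'a \<Rightarrow> 'a" where
  "riem_grad f M x = (SOME g. \<exists>U ft G. local_C1_extension f M x U ft G \<and>
       g = closest_point (tangent_space M x) (G x))"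

definition partly_smooth_at :: "('a::euclidean_space \<Rightarrow> ereal) \<Rightarrow> 'a set \<Rightarrow> 'a \<Rightarrow> bool" where
  "partly_smooth_at f M x \<longleftrightarrow> x \<in> M \<and>
     \<comment> \<open>regularity\<close>
     (\<exists>U. open U \<and> x \<in> U \<and>
        (\<forall>z\<in>M \<inter> U. frechet_subdiff f z = subdiff f z \<and> subdiff f z \<noteq> {})) \<and>
     \<comment> \<open>restricted smoothness\<close>
     (\<exists>U ft G. local_C1_extension f M x U ft G) \<and>
     \<comment> \<open>sharpness\<close>
     par (subdiff f x) = normal_space M x \<and>
     \<comment> \<open>inner semicontinuity\<close>
     (\<forall>y\<in>subdiff f x. \<forall>X. (\<forall>r. X r \<in> M) \<and> X \<longlonglongrightarrow> x \<longrightarrow>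
        (\<exists>Y. (\<forall>\<^sub>F r in sequentially. Y r \<in> subdiff f (X r)) \<and> Y \<longlonglongrightarrow> y))"

definition partly_smooth_around :: "('a::euclidean_space \<Rightarrow> ereal) \<Rightarrow> 'a set \<Rightarrow> 'a \<Rightarrow> bool" where
  "partly_smooth_around f M xb \<longleftrightarrow>
     (\<exists>U. open U \<and> xb \<in> U \<and> (\<forall>x\<in>M \<inter> U. partly_smooth_at f M x))"

end

(*
  For convex f the limiting subdifferential is the ordinary convex subdifferential, and at points
  z of M near xb every subgradient differs from the Riemannian gradient by a normal vector.
  Both claims are proved by contradiction, producing points z_n -> xb of M and unit normals e_n
  at z_n that asymptotically separate the subdifferentials: w . e_n <= c_n -> 0 for all
  w in subdiff f z_n. A limit e of the e_n is normal at xb (normal spaces of a C^1 submanifold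
  form a closed bundle), so e lies in par (subdiff f xb) by sharpness; as 0 is a relative interior
  point, some w in subdiff f xb has w . e > 0, and inner semicontinuity carries w to
  subgradients at z_n, contradicting the separation. In the first claim, if the Riemannian
  gradient p_n at z_n were not a subgradient, e_n is the direction from the nearest subgradient
  to p_n; in the second, z_n is the nearest point of M to points x_n outside M carrying small
  subgradients y_n, e_n is the direction from z_n to x_n, and monotonicity gives c_n = y_n . e_n.
*)

theory Submission
  imports Defs
begin

section \<open>The convex subdifferential\<close>

definition convex_subdiff :: "('a::real_inner \<Rightarrow> ereal) \<Rightarrow> 'a \<Rightarrow> 'a set" where
  "convex_subdiff f x = {y. \<bar>f x\<bar> \<noteq> \<infinity> \<and> (\<forall>w. f x + ereal (y \<bullet> (w - x)) \<le> f w)}"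

lemma convex_fun_le_combination:
  fixes f :: "'a::real_vector \<Rightarrow> ereal"
  assumes "convex_fun f" "f a \<le> ereal s" "f b \<le> ereal t" "0 \<le> u" "u \<le> 1"
  shows "f ((1 - u) *\<^sub>R a + u *\<^sub>R b) \<le> ereal ((1 - u) * s + u * t)"
proof -
  have "(1 - u) *\<^sub>R (a, s) + u *\<^sub>R (b, t) \<in> epigraph f"
    using assms unfolding convex_fun_def convex_def by (auto simp: epigraph_def)
  then show ?thesis by (simp add: epigraph_def)
qed

lemma frechet_subdiff_subset_convex_subdiff:
  fixes f :: "'a::real_inner \<Rightarrow> ereal"
  assumes "convex_fun f" and no_minf: "\<And>x. f x \<noteq> -\<infinity>"
  shows "frechet_subdiff f x \<subseteq> convex_subdiff f x"
proof
  fix y assume y: "y \<in> frechet_subdiff f x"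
  then obtain a where fx: "f x = ereal a"
    unfolding frechet_subdiff_def by (cases "f x") auto
  have "f x + ereal (y \<bullet> (w - x)) \<le> f w" for w
  proof (cases "f w")
    case (real b)
    show ?thesis
    proof (rule ccontr)
      \<comment> \<open>Otherwise convexity along the segment from x to w beats the Frechet estimate at x
        once the tolerance \<open>\<epsilon>\<close> is below half the gap \<open>\<eta>\<close>.\<close>
      assume "\<not> ?thesis"
      then have \<eta>: "0 < a + y \<bullet> (w - x) - b" (is "0 < ?\<eta>") using fx real by simp
      define c where "c = norm (w - x) + 1"
      have "c > 0" "norm (w - x) < c" by (simp_all add: c_def add_nonneg_pos)
      define \<epsilon> where "\<epsilon> = ?\<eta> / (2 * c)"
      have "\<epsilon> > 0" using \<eta> \<open>c > 0\<close> by (simp add: \<epsilon>_def)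
      then obtain \<delta> where "\<delta> > 0" and \<delta>: "\<And>z. norm (z - x) < \<delta> \<Longrightarrow>
          f x + ereal (y \<bullet> (z - x) - \<epsilon> * norm (z - x)) \<le> f z"
        using y unfolding frechet_subdiff_def by blast
      define t where "t = min 1 (\<delta> / c)"
      have t: "0 < t" "t \<le> 1" using \<open>\<delta> > 0\<close> \<open>c > 0\<close> by (simp_all add: t_def)
      have "t * norm (w - x) \<le> \<delta> / c * norm (w - x)"
        by (intro mult_right_mono) (auto simp: t_def)
      also have "\<dots> < \<delta>"
        using \<open>\<delta> > 0\<close> \<open>c > 0\<close> \<open>norm (w - x) < c\<close> by (simp add: field_simps)
      finally have "norm (t *\<^sub>R (w - x)) < \<delta>" using t by simp
      define p where "p = (1 - t) *\<^sub>R x + t *\<^sub>R w"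
      have px: "p - x = t *\<^sub>R (w - x)" by (simp add: p_def algebra_simps)
      have "ereal (a + (t * (y \<bullet> (w - x)) - \<epsilon> * (t * norm (w - x)))) \<le> f p"
        using \<delta>[of p] \<open>norm (t *\<^sub>R (w - x)) < \<delta>\<close> t fx unfolding px by simp
      also have "\<dots> \<le> ereal ((1 - t) * a + t * b)"
        using convex_fun_le_combination[OF assms(1), of x a w b t] fx real t by (simp add: p_def)
      finally have "t * (?\<eta> - \<epsilon> * norm (w - x)) \<le> 0"
        by (simp add: algebra_simps)
      moreover have "\<epsilon> * norm (w - x) \<le> \<epsilon> * c"
        using \<open>\<epsilon> > 0\<close> \<open>norm (w - x) < c\<close> by simp
      moreover have "\<epsilon> * c = ?\<eta> / 2"
        using \<open>c > 0\<close> by (simp add: \<epsilon>_def)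
      ultimately show False using t \<eta> by (simp add: mult_le_0_iff)
    qed
  qed (use no_minf in auto)
  with fx show "y \<in> convex_subdiff f x" by (simp add: convex_subdiff_def)
qed

lemma convex_subdiff_subset_frechet_subdiff: "convex_subdiff f x \<subseteq> frechet_subdiff f x"
proof
  fix y assume "y \<in> convex_subdiff f x"
  then have fx: "\<bar>f x\<bar> \<noteq> \<infinity>" and y: "\<And>w. f x + ereal (y \<bullet> (w - x)) \<le> f w"
    by (auto simp: convex_subdiff_def)
  have "f x + ereal (y \<bullet> (z - x) - \<epsilon> * norm (z - x)) \<le> f z" if "\<epsilon> > 0" for \<epsilon> z
  proof -
    have "0 \<le> \<epsilon> * norm (z - x)" using that by simp
    then show ?thesis using y[of z] fx by (cases "f x"; cases "f z") auto
  qed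
  with fx show "y \<in> frechet_subdiff f x"
    unfolding frechet_subdiff_def by (auto intro: exI[of _ 1])
qed

lemma subdiff_eq_convex_subdiff:
  fixes f :: "'a::real_inner \<Rightarrow> ereal"
  assumes "convex_fun f" and no_minf: "\<And>x. f x \<noteq> -\<infinity>"
  shows "subdiff f x = convex_subdiff f x"
proof
  show "subdiff f x \<subseteq> convex_subdiff f x"
  proof
    fix y assume "y \<in> subdiff f x"
    then obtain X Y where fx: "\<bar>f x\<bar> \<noteq> \<infinity>" and X: "X \<longlonglongrightarrow> x"
      and fX: "(\<lambda>k. f (X k)) \<longlonglongrightarrow> f x" and Y: "\<And>k. Y k \<in> frechet_subdiff f (X k)"
      and "Y \<longlonglongrightarrow> y"
      unfolding subdiff_def mem_Collect_eq by metis
    have Y': "Y k \<in> convex_subdiff f (X k)" for k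
      using Y frechet_subdiff_subset_convex_subdiff[OF assms] by blast
    define r where "r k = real_of_ereal (f (X k))" for k
    have fX_r: "f (X k) = ereal (r k)" for k
      using Y'[of k] by (cases "f (X k)") (auto simp: r_def convex_subdiff_def)
    obtain a where fx_a: "f x = ereal a" using fx by (cases "f x") auto
    have "r \<longlonglongrightarrow> a" using fX unfolding fX_r fx_a by (simp add: lim_ereal)
    have "f x + ereal (y \<bullet> (w - x)) \<le> f w" for w
    proof (cases "f w")
      case (real b)
      have "(\<lambda>k. r k + Y k \<bullet> (w - X k)) \<longlonglongrightarrow> a + y \<bullet> (w - x)"
        by (intro tendsto_intros \<open>r \<longlonglongrightarrow> a\<close> \<open>Y \<longlonglongrightarrow> y\<close> X)
      moreover have "r k + Y k \<bullet> (w - X k) \<le> b" for k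
        using Y'[of k] fX_r[of k] real by (auto simp: convex_subdiff_def dest: spec[of _ w])
      ultimately have "a + y \<bullet> (w - x) \<le> b" by (meson LIMSEQ_le_const2)
      then show ?thesis using fx_a real by simp
    qed (use no_minf in auto)
    with fx show "y \<in> convex_subdiff f x" by (simp add: convex_subdiff_def)
  qed
  show "convex_subdiff f x \<subseteq> subdiff f x"
  proof
    fix y assume y: "y \<in> convex_subdiff f x"
    then have "\<bar>f x\<bar> \<noteq> \<infinity>" "y \<in> frechet_subdiff f x"
      using convex_subdiff_subset_frechet_subdiff[of f x] by (auto simp: convex_subdiff_def)
    then show "y \<in> subdiff f x"
      unfolding subdiff_def by (intro CollectI conjI exI[of _ "\<lambda>_. x"] exI[of _ "\<lambda>_. y"]) auto
  qed
qed

lemma closed_convex_ereal_halfspace: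
  "closed {y. ereal c + ereal (y \<bullet> v) \<le> e} \<and> convex {y. ereal c + ereal (y \<bullet> v) \<le> e}"
proof (cases e)
  case (real d)
  then have "{y. ereal c + ereal (y \<bullet> v) \<le> e} = {y. v \<bullet> y \<le> d - c}"
    by (auto simp: inner_commute)
  then show ?thesis by (simp add: closed_halfspace_le convex_halfspace_le)
qed simp_all

lemma convex_subdiff_eq_INT:
  assumes "f x = ereal c"
  shows "convex_subdiff f x = (\<Inter>w. {y. ereal c + ereal (y \<bullet> (w - x)) \<le> f w})"
  using assms by (auto simp: convex_subdiff_def)

lemma closed_convex_subdiff: "closed (convex_subdiff f x)"
proof (cases "f x")
  case (real c)
  then show ?thesis
    unfolding convex_subdiff_eq_INT[of f x, OF real] using closed_convex_ereal_halfspace by blast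
qed (simp_all add: convex_subdiff_def)

lemma convex_convex_subdiff: "convex (convex_subdiff f x)"
proof (cases "f x")
  case (real c)
  then show ?thesis
    unfolding convex_subdiff_eq_INT[of f x, OF real] using closed_convex_ereal_halfspace by (blast intro: convex_INT)
qed (simp_all add: convex_subdiff_def)

lemma closed_and_convex_subdiff:
  assumes "convex_fun f" "\<And>x. f x \<noteq> -\<infinity>"
  shows "closed (subdiff f x)" "convex (subdiff f x)"
  by (simp_all add: subdiff_eq_convex_subdiff[OF assms] closed_convex_subdiff convex_convex_subdiff)

lemma convex_subdiff_monotone:
  assumes "y \<in> convex_subdiff f x" "y' \<in> convex_subdiff f x'"
  shows "(y' - y) \<bullet> (x' - x) \<ge> 0"
proof -
  obtain c c' where "f x = ereal c" "f x' = ereal c'"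
    using assms by (cases "f x"; cases "f x'") (auto simp: convex_subdiff_def)
  moreover have "f x + ereal (y \<bullet> (x' - x)) \<le> f x'" "f x' + ereal (y' \<bullet> (x - x')) \<le> f x"
    using assms by (auto simp: convex_subdiff_def)
  ultimately show ?thesis by (simp add: inner_diff_left inner_diff_right algebra_simps)
qed

section \<open>Orthogonal projections and sequential limits\<close>

lemma closest_point_subspace:
  fixes T :: "'a::euclidean_space set"
  assumes "subspace T"
  shows "closest_point T a \<in> T" "a - closest_point T a \<in> T\<^sup>\<bottom>"
proof -
  have T: "convex T" "closed T" "T \<noteq> {}"
    using assms subspace_imp_convex closed_subspace subspace_0 by blast+
  show p: "closest_point T a \<in> T" using T by (simp add: closest_point_in_set)
  have "(a - closest_point T a) \<bullet> u = 0" if "u \<in> T" for u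
  proof -
    have "closest_point T a + u \<in> T" "closest_point T a - u \<in> T"
      using assms p that by (auto intro: subspace_add subspace_diff)
    from closest_point_dot[OF T(1,2) this(1), of a] closest_point_dot[OF T(1,2) this(2), of a]
    show ?thesis
      by (simp add: inner_diff_right)
  qed
  then show "a - closest_point T a \<in> T\<^sup>\<bottom>"
    by (simp add: orthogonal_comp_def orthogonal_def inner_commute)
qed

lemma closest_point_subspace_unique:
  fixes T :: "'a::euclidean_space set"
  assumes "subspace T" "p \<in> T" "a - p \<in> T\<^sup>\<bottom>"
  shows "closest_point T a = p"
proof -
  have "p - closest_point T a = (a - closest_point T a) - (a - p)" by (simp add: algebra_simps)
  also have "\<dots> \<in> T\<^sup>\<bottom>"
    by (rule subspace_diff[OF subspace_orthogonal_comp closest_point_subspace(2)[OF assms(1)] assms(3)])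
  finally have "p - closest_point T a \<in> T\<^sup>\<bottom>" .
  moreover have "p - closest_point T a \<in> T"
    using subspace_diff[OF assms(1,2) closest_point_subspace(1)[OF assms(1)]] .
  ultimately have "p - closest_point T a \<in> T \<inter> T\<^sup>\<bottom>" by blast
  then show ?thesis unfolding orthogonal_Int_0[OF assms(1)] by simp
qed

lemma linear_closest_point_subspace:
  fixes T :: "'a::euclidean_space set"
  assumes "subspace T"
  shows "linear (closest_point T)"
proof
  note cp = closest_point_subspace[OF assms] and Tperp = subspace_orthogonal_comp[of T]
  show "closest_point T (a + b) = closest_point T a + closest_point T b" for a b
  proof (rule closest_point_subspace_unique[OF assms])
    have "a + b - (closest_point T a + closest_point T b) =
        (a - closest_point T a) + (b - closest_point T b)" by simp
    also have "\<dots> \<in> T\<^sup>\<bottom>" by (rule subspace_add[OF Tperp cp(2)[of a] cp(2)[of b]])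
    finally show "a + b - (closest_point T a + closest_point T b) \<in> T\<^sup>\<bottom>" .
    show "closest_point T a + closest_point T b \<in> T"
      using subspace_add[OF assms cp(1)[of a] cp(1)[of b]] .
  qed
  show "closest_point T (r *\<^sub>R a) = r *\<^sub>R closest_point T a" for r a
  proof (rule closest_point_subspace_unique[OF assms])
    show "r *\<^sub>R a - r *\<^sub>R closest_point T a \<in> T\<^sup>\<bottom>"
      using subspace_scale[OF Tperp cp(2)[of a], of r] by (simp add: scaleR_right_diff_distrib)
    show "r *\<^sub>R closest_point T a \<in> T"
      using subspace_scale[OF assms cp(1)[of a]] .
  qed
qed

lemma closest_point_residual_inner_nonpos:
  fixes S :: "'a::euclidean_space set"
  assumes "convex S" "closed S" "w \<in> S" "(a - closest_point S a) \<bullet> a = 0"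
  shows "(a - closest_point S a) \<bullet> w \<le> 0"
proof -
  have "(a - closest_point S a) \<bullet> (w - closest_point S a) \<le> 0"
    using assms(1-3) by (rule closest_point_dot)
  moreover have "0 \<le> (a - closest_point S a) \<bullet> (a - closest_point S a)" by simp
  ultimately show ?thesis using assms(4) by (simp add: inner_diff_right)
qed

lemma add_orthogonal_comp_mem_iff:
  fixes K :: "'a::real_inner set"
  assumes "subspace K" "a \<in> K" "b \<in> K\<^sup>\<bottom>"
  shows "a + b \<in> K \<longleftrightarrow> b = 0"
proof
  assume "a + b \<in> K"
  then have "b \<in> K \<inter> K\<^sup>\<bottom>" using subspace_diff[OF assms(1) _ assms(2)] assms(3) by force
  then show "b = 0" unfolding orthogonal_Int_0[OF assms(1)] by simp
qed (use assms in simp)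

lemma adjoint_plus_closest_point_kernel_mem_iff:
  fixes A :: "'a::euclidean_space \<Rightarrow> 'b::euclidean_space"
  assumes "linear A"
  shows "adjoint A y + closest_point {x. A x = 0} h \<in> {x. A x = 0} \<longleftrightarrow> adjoint A y = 0"
proof -
  define K where "K = {x. A x = 0}"
  have K: "K = (range (adjoint A))\<^sup>\<bottom>"
    using ker_orthogonal_comp_adjoint[OF assms] by (simp add: K_def vimage_def)
  then have "subspace K" by (simp add: subspace_orthogonal_comp)
  moreover have "adjoint A y \<in> K\<^sup>\<bottom>"
    unfolding K by (rule subsetD[OF orthogonal_comp_subset rangeI])
  ultimately have "closest_point K h + adjoint A y \<in> K \<longleftrightarrow> adjoint A y = 0"
    by (intro add_orthogonal_comp_mem_iff closest_point_subspace(1))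
  then show ?thesis by (simp only: K_def add.commute)
qed

lemma adjoint_eq_0_iff_on_range:
  fixes A :: "'a::euclidean_space \<Rightarrow> 'b::euclidean_space"
  assumes "linear A" "y \<in> range A"
  shows "adjoint A y = 0 \<longleftrightarrow> y = 0"
proof -
  obtain x where "y = A x" using assms(2) by blast
  then have "y \<bullet> y = x \<bullet> adjoint A y" using adjoint_works[OF assms(1)] by simp
  then show ?thesis using adjoint_linear[OF assms(1)] linear_0 by force
qed

lemma inj_adjoint_comp_plus_closest_point_kernel:
  fixes A :: "'a::euclidean_space \<Rightarrow> 'b::euclidean_space"
  assumes "linear A"
  shows "inj (\<lambda>h. adjoint A (A h) + closest_point {x. A x = 0} h)"
proof -
  have K: "subspace {x. A x = 0}" using assms by (rule linear_subspace_kernel)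
  have "linear (\<lambda>h. adjoint A (A h) + closest_point {x. A x = 0} h)"
    using linear_compose[OF assms adjoint_linear[OF assms]] linear_closest_point_subspace[OF K]
    by (intro linear_compose_add) (simp_all add: o_def)
  moreover have "h = 0" if h: "adjoint A (A h) + closest_point {x. A x = 0} h = 0" for h
  proof -
    have "adjoint A (A h) + closest_point {x. A x = 0} h \<in> {x. A x = 0}"
      unfolding h using linear_0[OF assms] by simp
    then have "adjoint A (A h) = 0"
      unfolding adjoint_plus_closest_point_kernel_mem_iff[OF assms] .
    then have "A h = 0" using adjoint_eq_0_iff_on_range[OF assms rangeI] by blast
    then have "closest_point {x. A x = 0} h = h" by (simp add: closest_point_self)
    then show "h = 0" using h \<open>adjoint A (A h) = 0\<close> by simp
  qed
  ultimately show ?thesis using linear_inj_iff_eq_0 by blast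
qed


lemma infdist_zero_eq_norm:
  fixes S :: "'a::real_inner set"
  assumes "p \<in> S" "\<And>y. y \<in> S \<Longrightarrow> (y - p) \<bullet> p = 0"
  shows "infdist 0 S = norm p"
proof (rule antisym)
  show "infdist 0 S \<le> norm p" using infdist_le[OF assms(1), of 0] by simp
  have "norm p \<le> dist 0 y" if "y \<in> S" for y
  proof -
    have "y \<bullet> y = p \<bullet> p + (y - p) \<bullet> (y - p)"
      using assms(2)[OF that] by (simp add: inner_diff_left inner_diff_right inner_commute)
    then show ?thesis by (simp add: norm_le)
  qed
  moreover have "S \<noteq> {}" using assms(1) by blast
  ultimately show "norm p \<le> infdist 0 S"
    by (simp add: infdist_notempty cINF_greatest)
qed

lemma rel_interior_zero_inner_pos:
  fixes S :: "'a::euclidean_space set"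
  assumes "0 \<in> rel_interior S" "e \<in> par S" "e \<noteq> 0"
  obtains w where "w \<in> S" "w \<bullet> e > 0"
proof -
  obtain r where "r > 0" and r: "ball 0 r \<inter> affine hull S \<subseteq> S" and "0 \<in> S"
    using assms(1) unfolding mem_rel_interior_ball by blast
  have "affine hull S = span S"
    using \<open>0 \<in> S\<close> by (simp add: affine_hull_span_0 hull_inc)
  moreover have "par S \<subseteq> span S"
    unfolding par_def by (rule span_minimal) (auto intro: span_diff span_base)
  ultimately have "(r / (2 * norm e)) *\<^sub>R e \<in> affine hull S"
    using assms(2) by (auto intro: span_mul)
  moreover have "(r / (2 * norm e)) *\<^sub>R e \<in> ball 0 r"
    using \<open>r > 0\<close> assms(3) by simp
  ultimately show ?thesis
    using r \<open>r > 0\<close> assms(3) by (intro that[of "(r / (2 * norm e)) *\<^sub>R e"]) auto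
qed

lemma tendsto_blinfun_solution:
  fixes L :: "nat \<Rightarrow> 'a::euclidean_space \<Rightarrow>\<^sub>L 'b::euclidean_space"
  assumes "L \<longlonglongrightarrow> L0" "inj (blinfun_apply L0)" "\<forall>\<^sub>F r in sequentially. L r (u r) = L0 v"
  shows "u \<longlonglongrightarrow> v"
proof -
  obtain c where "c > 0" and c: "\<And>h. c * norm h \<le> norm (L0 h)"
    using linear_inj_bounded_below_pos[OF bounded_linear.linear[OF blinfun.bounded_linear_right] assms(2)] by blast
  define \<delta> where "\<delta> r = norm (L r - L0)" for r
  have "\<delta> \<longlonglongrightarrow> 0"
    using assms(1) unfolding \<delta>_def by (simp add: tendsto_norm_zero LIM_zero)
  then have "\<forall>\<^sub>F r in sequentially. \<delta> r < c / 2"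
    using order_tendstoD(2)[OF \<open>\<delta> \<longlonglongrightarrow> 0\<close>, of "c / 2"] \<open>c > 0\<close> by simp
  with assms(3) have "\<forall>\<^sub>F r in sequentially. norm (u r - v) \<le> (2 / c * norm v) * \<delta> r"
  proof eventually_elim
    case (elim r)
    have "c * norm (u r - v) \<le> norm ((L r - L0) (u r))"
      using c[of "u r - v"] elim(1) by (simp add: blinfun.diff_left blinfun.diff_right norm_minus_commute)
    also have "\<dots> \<le> \<delta> r * norm (u r)" unfolding \<delta>_def by (rule norm_blinfun)
    also have "\<dots> \<le> \<delta> r * (norm (u r - v) + norm v)"
      using norm_triangle_sub[of "u r" v] by (intro mult_left_mono) (auto simp: \<delta>_def)
    also have "\<dots> = \<delta> r * norm (u r - v) + \<delta> r * norm v" by (simp add: distrib_left)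
    also have "\<dots> \<le> c / 2 * norm (u r - v) + \<delta> r * norm v"
      using elim(2) by (intro add_right_mono mult_right_mono) auto
    finally show ?case using \<open>c > 0\<close> by (simp add: field_simps)
  qed
  moreover have "(\<lambda>r. (2 / c * norm v) * \<delta> r) \<longlonglongrightarrow> 0"
    using tendsto_mult_left[OF \<open>\<delta> \<longlonglongrightarrow> 0\<close>, of "2 / c * norm v"] by simp
  ultimately show ?thesis
    by (rule Lim_null_comparison[THEN LIM_zero_cancel])
qed

lemma eventually_nhds_by_sequences:
  fixes a :: "'a::first_countable_topology"
  assumes "open S" "a \<in> S"
    and no_bad_seq: "\<And>X. (\<And>n. X n \<in> S) \<Longrightarrow> X \<longlonglongrightarrow> a \<Longrightarrow> (\<And>n. \<not> P (X n)) \<Longrightarrow> False"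
  shows "eventually P (nhds a)"
proof -
  have "eventually (\<lambda>x. x \<in> S \<longrightarrow> P x) (nhds a)"
    unfolding eventually_nhds_iff_sequentially
  proof (intro allI impI)
    fix X assume "X \<longlonglongrightarrow> a"
    show "\<forall>\<^sub>F n in sequentially. X n \<in> S \<longrightarrow> P (X n)"
    proof (rule ccontr)
      assume not_ev: "\<not> ?thesis"
      obtain r :: "nat \<Rightarrow> nat" where "strict_mono r" and r: "\<And>n. \<not> (X (r n) \<in> S \<longrightarrow> P (X (r n)))"
        using not_eventually_sequentiallyD[OF not_ev] by blast
      show False
      proof (rule no_bad_seq[of "X \<circ> r"])
        show "(X \<circ> r) \<longlonglongrightarrow> a" using \<open>X \<longlonglongrightarrow> a\<close> \<open>strict_mono r\<close> by (rule LIMSEQ_subseq_LIMSEQ)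
      qed (use r in auto)
    qed
  qed
  moreover have "eventually (\<lambda>x. x \<in> S) (nhds a)" using assms(1,2) by (rule eventually_nhds_in_open)
  ultimately show ?thesis by eventually_elim simp
qed

lemma eventually_nhds_Pair_metric:
  fixes a :: "'a::metric_space" and b :: "'b::metric_space"
  assumes "\<forall>\<^sub>F (x, y) in nhds (a, b). P x y"
  obtains \<delta> \<epsilon> where "\<delta> > 0" "\<epsilon> > 0" "\<And>x y. dist x a < \<delta> \<Longrightarrow> dist y b < \<epsilon> \<Longrightarrow> P x y"
proof -
  have "\<exists>Pa Pb. eventually Pa (nhds a) \<and> eventually Pb (nhds b) \<and> (\<forall>x y. Pa x \<longrightarrow> Pb y \<longrightarrow> P x y)"
    using assms unfolding nhds_prod eventually_prod_filter by simp
  then obtain Pa Pb where "eventually Pa (nhds a)" "eventually Pb (nhds b)"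
    and P: "\<And>x y. Pa x \<Longrightarrow> Pb y \<Longrightarrow> P x y"
    by blast
  obtain \<delta> where "\<delta> > 0" "\<And>x. dist x a < \<delta> \<Longrightarrow> Pa x"
    using \<open>eventually Pa (nhds a)\<close> unfolding eventually_nhds_metric by blast
  moreover obtain \<epsilon> where "\<epsilon> > 0" "\<And>y. dist y b < \<epsilon> \<Longrightarrow> Pb y"
    using \<open>eventually Pb (nhds b)\<close> unfolding eventually_nhds_metric by blast
  ultimately show ?thesis using P that by blast
qed

section \<open>Tangent and normal spaces of \<open>C\<^sup>1\<close> submanifolds\<close>

lemma normal_space_eq_orthogonal_comp: "normal_space M x = (tangent_space M x)\<^sup>\<bottom>"
  by (auto simp: normal_space_def orthogonal_comp_def orthogonal_def inner_commute)

lemma subspace_normal_space: "subspace (normal_space M x)"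
  unfolding normal_space_eq_orthogonal_comp by (rule subspace_orthogonal_comp)

lemma has_derivative_local_min_on_tangent:
  fixes \<psi> :: "'a::euclidean_space \<Rightarrow> real"
  assumes "v \<in> tangent_space M z" "open S" "z \<in> S"
    and "(\<psi> has_derivative \<psi>') (at z)" and min: "\<And>m. m \<in> M \<inter> S \<Longrightarrow> \<psi> z \<le> \<psi> m"
  shows "\<psi>' v = 0"
proof -
  obtain \<gamma> e where "e > 0" and \<gamma>M: "\<And>t. t \<in> {-e<..<e} \<Longrightarrow> \<gamma> t \<in> M" and "\<gamma> 0 = z"
    and \<gamma>': "(\<gamma> has_vector_derivative v) (at 0)"
    using assms(1) unfolding tangent_space_def by blast
  have "(\<gamma> \<longlongrightarrow> z) (at 0)"
    using has_vector_derivative_continuous[OF \<gamma>'] \<open>\<gamma> 0 = z\<close> by (simp add: continuous_at)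
  then have "\<forall>\<^sub>F t in at 0. \<gamma> t \<in> S"
    using assms(2,3) by (rule topological_tendstoD)
  moreover have "\<forall>\<^sub>F t in at 0. \<gamma> t \<in> M"
    unfolding eventually_at using \<open>e > 0\<close> \<gamma>M
    by (intro exI[of _ e]) (auto simp: dist_real_def abs_less_iff)
  ultimately have "\<forall>\<^sub>F t in at 0. (\<psi> \<circ> \<gamma>) 0 \<le> (\<psi> \<circ> \<gamma>) t"
    by eventually_elim (use min \<open>\<gamma> 0 = z\<close> in auto)
  moreover have "((\<psi> \<circ> \<gamma>) has_derivative (\<lambda>t. t *\<^sub>R \<psi>' v)) (at 0)"
    using vector_derivative_diff_chain_within[of \<gamma> v 0 UNIV \<psi> \<psi>'] \<gamma>' assms(4) \<open>\<gamma> 0 = z\<close>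
    by (auto simp: has_vector_derivative_def intro: has_derivative_at_withinI)
  ultimately have "(\<lambda>t::real. t *\<^sub>R \<psi>' v) = (\<lambda>h. 0)"
    by (intro has_derivative_local_min)
  then show ?thesis by (metis scaleR_one)
qed

lemma nearest_point_normal:
  fixes a z :: "'a::euclidean_space"
  assumes "open S" "z \<in> S" "\<And>m. m \<in> M \<inter> S \<Longrightarrow> dist a z \<le> dist a m"
  shows "a - z \<in> normal_space M z"
  unfolding normal_space_def
proof (intro CollectI ballI)
  fix v assume v: "v \<in> tangent_space M z"
  have "((\<lambda>w. (a - w) \<bullet> (a - w)) has_derivative (\<lambda>h. - 2 * ((a - z) \<bullet> h))) (at z)"
    by (auto intro!: derivative_eq_intros simp: inner_commute)
  moreover have "(a - z) \<bullet> (a - z) \<le> (a - m) \<bullet> (a - m)" if "m \<in> M \<inter> S" for m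
    using assms(3)[OF that] by (simp add: dist_norm norm_le)
  ultimately have "- 2 * ((a - z) \<bullet> v) = 0"
    using has_derivative_local_min_on_tangent[OF v assms(1,2)] by blast
  then show "(a - z) \<bullet> v = 0" by simp
qed

lemma tangent_space_subset_vimage:
  fixes \<Phi> :: "'a::euclidean_space \<Rightarrow> 'b::euclidean_space"
  assumes "open U" "subspace K" "M \<inter> U = {z \<in> U. \<Phi> z \<in> K}" "z \<in> M \<inter> U"
    and "(\<Phi> has_derivative \<Phi>') (at z)"
  shows "tangent_space M z \<subseteq> \<Phi>' -` K"
proof
  fix v assume v: "v \<in> tangent_space M z"
  have "e \<bullet> \<Phi>' v = 0" if e: "e \<in> K\<^sup>\<bottom>" for e
  proof (rule has_derivative_local_min_on_tangent[OF v assms(1)])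
    have "e \<bullet> \<Phi> m = 0" if "m \<in> M \<inter> U" for m
      using e that assms(3) by (auto simp: orthogonal_comp_def orthogonal_def inner_commute)
    then show "\<And>m. m \<in> M \<inter> U \<Longrightarrow> e \<bullet> \<Phi> z \<le> e \<bullet> \<Phi> m"
      using assms(4) by simp
  qed (use assms(4,5) in \<open>auto intro: derivative_eq_intros\<close>)
  then have "\<Phi>' v \<in> K\<^sup>\<bottom>\<^sup>\<bottom>"
    by (simp add: orthogonal_comp_def orthogonal_def)
  then show "v \<in> \<Phi>' -` K" by (simp add: orthogonal_comp_self[OF assms(2)])
qed

lemma vimage_subset_tangent_space:
  fixes \<Phi> :: "'a::euclidean_space \<Rightarrow> 'b::euclidean_space"
  assumes "homeomorphism U V \<Phi> g" "open V" "subspace K" "M \<inter> U = {z \<in> U. \<Phi> z \<in> K}" "z \<in> M \<inter> U"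
    and "(g has_derivative g') (at (\<Phi> z))" "\<And>h. g' (\<Phi>' h) = h"
  shows "\<Phi>' -` K \<subseteq> tangent_space M z"
proof
  fix h assume "h \<in> \<Phi>' -` K"
  define k where "k = \<Phi>' h"
  have "k \<in> K" "g' k = h" using \<open>h \<in> \<Phi>' -` K\<close> assms(7) by (simp_all add: k_def)
  have "\<Phi> z \<in> V \<inter> K" "g (\<Phi> z) = z" using assms(1,4,5) unfolding homeomorphism_def by auto
  obtain e where "e > 0" and e: "ball (\<Phi> z) e \<subseteq> V"
    using assms(2) \<open>\<Phi> z \<in> V \<inter> K\<close> openE by blast
  define c where "c = e / (norm k + 1)"
  have "c > 0" using \<open>e > 0\<close> by (simp add: c_def add_nonneg_pos)
  have "g (\<Phi> z + t *\<^sub>R k) \<in> M" if "t \<in> {-c<..<c}" for t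
  proof -
    have "\<bar>t\<bar> * norm k \<le> c * norm k" using that by (intro mult_right_mono) auto
    also have "\<dots> < c * (norm k + 1)" using \<open>c > 0\<close> by simp
    also have "\<dots> = e" unfolding c_def by (simp add: add_nonneg_eq_0_iff)
    finally have "\<Phi> z + t *\<^sub>R k \<in> V" using e by (auto simp: dist_norm)
    moreover have "\<Phi> z + t *\<^sub>R k \<in> K"
      using assms(3) \<open>\<Phi> z \<in> V \<inter> K\<close> \<open>k \<in> K\<close> by (simp add: subspace_add subspace_scale)
    ultimately show ?thesis using assms(1,4) unfolding homeomorphism_def by force
  qed
  moreover have "((\<lambda>t. g (\<Phi> z + t *\<^sub>R k)) has_vector_derivative h) (at 0)"
  proof -
    have line: "((\<lambda>t. \<Phi> z + t *\<^sub>R k) has_vector_derivative k) (at 0)"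
      by (auto intro!: derivative_eq_intros simp: has_vector_derivative_def)
    show ?thesis
      using vector_derivative_diff_chain_within[OF line, of g g'] assms(6) has_derivative_at_withinI
        \<open>g' k = h\<close> by (fastforce simp: o_def)
  qed
  ultimately show "h \<in> tangent_space M z"
    unfolding tangent_space_def using \<open>c > 0\<close> \<open>g (\<Phi> z) = z\<close> by force
qed

lemma C1_submanifold_straightening:
  fixes M :: "'a::euclidean_space set"
  assumes "C1_submanifold M" "x0 \<in> M"
  obtains U K \<Phi> \<Phi>' where "open U" "x0 \<in> U" "subspace (K :: 'a set)"
    "\<And>z. z \<in> U \<Longrightarrow> (\<Phi> has_derivative blinfun_apply (\<Phi>' z)) (at z)" "continuous_on U \<Phi>'"
    "inj (blinfun_apply (\<Phi>' x0))" "M \<inter> U = {z \<in> U. \<Phi> z \<in> K}"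
proof -
  obtain U and F :: "'a \<Rightarrow> 'a" and F' W where "open U" "x0 \<in> U"
    and F': "\<And>z. z \<in> U \<Longrightarrow> (F has_derivative blinfun_apply (F' z)) (at z)"
    and "continuous_on U F'" and FW: "\<And>z. z \<in> U \<Longrightarrow> F z \<in> W"
    and W: "range (blinfun_apply (F' x0)) = W" and MU: "M \<inter> U = {z \<in> U. F z = 0}"
    using bspec[OF assms(1)[unfolded C1_submanifold_def] assms(2)]
    by (elim exE conjE) (rule that; assumption?; blast)
  define A where "A = blinfun_apply (F' x0)"
  have "linear A" unfolding A_def by (rule bounded_linear.linear[OF blinfun.bounded_linear_right])
  define K where "K = {x. A x = 0}"
  define Q where "Q = closest_point K"
  have bl: "bounded_linear (adjoint A)" "bounded_linear Q"
    using adjoint_linear[OF \<open>linear A\<close>] linear_closest_point_subspace[OF linear_subspace_kernel[OF \<open>linear A\<close>]]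
    by (simp_all add: Q_def K_def linear_conv_bounded_linear)
  \<comment> \<open>The first summand of \<open>\<Phi>\<close> is orthogonal to \<open>K = ker F'(x0)\<close> and vanishes exactly on \<open>M\<close>,
    the second is the projection onto \<open>K\<close>; so \<open>M = \<Phi>\<^sup>-\<^sup>1(K)\<close> locally and \<open>\<Phi>'(x0)\<close> is injective.\<close>
  define \<Phi> where "\<Phi> z = adjoint A (F z) + Q (z - x0)" for z
  define \<Phi>' where "\<Phi>' z = (Blinfun (adjoint A) o\<^sub>L F' z) + Blinfun Q" for z
  have \<Phi>'_apply: "blinfun_apply (\<Phi>' z) h = adjoint A (F' z h) + Q h" for z h
    unfolding \<Phi>'_def
    by (simp add: plus_blinfun.rep_eq bounded_linear_Blinfun_apply[OF bl(1)] bounded_linear_Blinfun_apply[OF bl(2)])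
  show ?thesis
  proof (rule that[of U K \<Phi> \<Phi>'])
    show "(\<Phi> has_derivative blinfun_apply (\<Phi>' z)) (at z)" if "z \<in> U" for z
    proof -
      have "((\<lambda>z. Q (z - x0)) has_derivative Q) (at z)"
        using bounded_linear.has_derivative[OF bl(2) has_derivative_diff[OF has_derivative_ident has_derivative_const]]
        by simp
      then show ?thesis
        unfolding \<Phi>_def \<Phi>'_apply[abs_def]
        by (rule has_derivative_add[OF bounded_linear.has_derivative[OF bl(1) F'[OF that]]])
    qed
    show "continuous_on U \<Phi>'"
      unfolding \<Phi>'_def by (intro continuous_intros \<open>continuous_on U F'\<close>)
    show "inj (blinfun_apply (\<Phi>' x0))"
      using inj_adjoint_comp_plus_closest_point_kernel[OF \<open>linear A\<close>]
      by (simp add: \<Phi>'_apply[abs_def] A_def Q_def K_def)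
    have "F z = 0 \<longleftrightarrow> \<Phi> z \<in> K" if "z \<in> U" for z
      using adjoint_eq_0_iff_on_range[OF \<open>linear A\<close>, of "F z"] FW[OF that] W
        adjoint_plus_closest_point_kernel_mem_iff[OF \<open>linear A\<close>]
      by (simp add: \<Phi>_def Q_def K_def A_def)
    then show "M \<inter> U = {z \<in> U. \<Phi> z \<in> K}" using MU by blast
  qed (simp_all add: \<open>open U\<close> \<open>x0 \<in> U\<close> K_def linear_subspace_kernel[OF \<open>linear A\<close>])
qed

lemma C1_submanifold_chart:
  fixes M :: "'a::euclidean_space set"
  assumes "C1_submanifold M" "x0 \<in> M"
  obtains U K \<Phi> \<Phi>' where "open U" "x0 \<in> U" "subspace (K :: 'a set)"
    "\<And>z. z \<in> U \<Longrightarrow> (\<Phi> has_derivative blinfun_apply (\<Phi>' z)) (at z)" "continuous_on U \<Phi>'"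
    "\<And>z. z \<in> U \<Longrightarrow> bij (blinfun_apply (\<Phi>' z))" "M \<inter> U = {z \<in> U. \<Phi> z \<in> K}"
    "\<And>z. z \<in> M \<inter> U \<Longrightarrow> tangent_space M z = blinfun_apply (\<Phi>' z) -` K"
proof -
  obtain U K \<Phi> \<Phi>' where "open U" "x0 \<in> U" "subspace (K :: 'a set)"
    and \<Phi>': "\<And>z. z \<in> U \<Longrightarrow> (\<Phi> has_derivative blinfun_apply (\<Phi>' z)) (at z)"
    and "continuous_on U \<Phi>'" and "inj (blinfun_apply (\<Phi>' x0))" and MU: "M \<inter> U = {z \<in> U. \<Phi> z \<in> K}"
    by (rule C1_submanifold_straightening[OF assms]) (rule that)
  obtain \<Psi> where "linear \<Psi>" "\<Psi> \<circ> blinfun_apply (\<Phi>' x0) = id"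
    using linear_injective_left_inverse[OF bounded_linear.linear[OF blinfun.bounded_linear_right]
        \<open>inj (blinfun_apply (\<Phi>' x0))\<close>] by blast
  then have inv: "Blinfun \<Psi> o\<^sub>L \<Phi>' x0 = id_blinfun"
    by (intro blinfun_eqI)
      (simp add: bounded_linear_Blinfun_apply linear_conv_bounded_linear pointfree_idE)
  obtain U' V g g' where "open U'" "U' \<subseteq> U" "x0 \<in> U'" "open V" "\<Phi> x0 \<in> V"
    and hom: "homeomorphism U' V \<Phi> g"
    and g': "\<And>y. y \<in> V \<Longrightarrow> (g has_derivative g' y) (at y)"
      "\<And>y. y \<in> V \<Longrightarrow> g' y = inv (blinfun_apply (\<Phi>' (g y)))"
      "\<And>y. y \<in> V \<Longrightarrow> bij (blinfun_apply (\<Phi>' (g y)))"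
    using inverse_function_theorem[OF \<open>open U\<close> \<Phi>' \<open>continuous_on U \<Phi>'\<close> \<open>x0 \<in> U\<close> inv] by metis
  have \<Phi>V: "\<Phi> z \<in> V" and g\<Phi>: "g (\<Phi> z) = z" if "z \<in> U'" for z
    using hom that unfolding homeomorphism_def by auto
  have MU': "M \<inter> U' = {z \<in> U'. \<Phi> z \<in> K}"
    using MU \<open>U' \<subseteq> U\<close> by blast
  show ?thesis
  proof (rule that[of U' K \<Phi> \<Phi>'])
    show "bij (blinfun_apply (\<Phi>' z))" if "z \<in> U'" for z
      using g'(3)[OF \<Phi>V[OF that]] by (simp add: g\<Phi>[OF that])
    show "tangent_space M z = blinfun_apply (\<Phi>' z) -` K" if z: "z \<in> M \<inter> U'" for z
    proof
      show "tangent_space M z \<subseteq> blinfun_apply (\<Phi>' z) -` K"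
        using z \<open>U' \<subseteq> U\<close> by (intro tangent_space_subset_vimage[OF \<open>open U'\<close> \<open>subspace K\<close> MU' z \<Phi>']) auto
      show "blinfun_apply (\<Phi>' z) -` K \<subseteq> tangent_space M z"
        using z g'(2,3)[OF \<Phi>V] g\<Phi>
        by (intro vimage_subset_tangent_space[OF hom \<open>open V\<close> \<open>subspace K\<close> MU' z g'(1)[OF \<Phi>V]])
          (auto simp: bij_is_inj)
    qed
  qed (use \<open>open U'\<close> \<open>x0 \<in> U'\<close> \<open>subspace K\<close> \<open>U' \<subseteq> U\<close> \<Phi>' MU'
        continuous_on_subset[OF \<open>continuous_on U \<Phi>'\<close>] in auto)
qed

lemma C1_submanifold_subspace_tangent_space:
  fixes M :: "'a::euclidean_space set"
  assumes "C1_submanifold M" "x \<in> M"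
  shows "subspace (tangent_space M x)"
proof -
  obtain U K \<Phi>' where "x \<in> U" "subspace (K :: 'a set)"
    and "\<And>z. z \<in> M \<inter> U \<Longrightarrow> tangent_space M z = blinfun_apply (\<Phi>' z) -` K"
    by (rule C1_submanifold_chart[OF assms]) (rule that)
  then show ?thesis
    using assms(2) linear_subspace_vimage[OF bounded_linear.linear[OF blinfun.bounded_linear_right]]
    by simp
qed

lemma C1_submanifold_locally_closed:
  fixes M :: "'a::euclidean_space set"
  assumes "C1_submanifold M" "x \<in> M"
  obtains \<rho> where "\<rho> > 0" "closed (M \<inter> cball x \<rho>)"
proof -
  obtain U K \<Phi> \<Phi>' where "open U" "x \<in> U" "subspace (K :: 'a set)"
    and \<Phi>': "\<And>z. z \<in> U \<Longrightarrow> (\<Phi> has_derivative blinfun_apply (\<Phi>' z)) (at z)"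
    and MU: "M \<inter> U = {z \<in> U. \<Phi> z \<in> K}"
    by (rule C1_submanifold_chart[OF assms]) (rule that)
  obtain \<rho> where "\<rho> > 0" "cball x \<rho> \<subseteq> U"
    using \<open>open U\<close> \<open>x \<in> U\<close> open_contains_cball by blast
  have "continuous_on (cball x \<rho>) \<Phi>"
    using \<open>cball x \<rho> \<subseteq> U\<close> \<Phi>' has_derivative_continuous
    by (blast intro: continuous_at_imp_continuous_on)
  then have "closed (cball x \<rho> \<inter> \<Phi> -` K)"
    using closed_subspace[OF \<open>subspace K\<close>] by (intro continuous_closed_preimage) auto
  moreover have "M \<inter> cball x \<rho> = cball x \<rho> \<inter> \<Phi> -` K"
    using MU \<open>cball x \<rho> \<subseteq> U\<close> by blast
  ultimately show ?thesis using \<open>\<rho> > 0\<close> that by metis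
qed

lemma C1_submanifold_tangent_space_approx:
  fixes M :: "'a::euclidean_space set"
  assumes "C1_submanifold M" "x \<in> M" "\<And>r. Z r \<in> M" "Z \<longlonglongrightarrow> x" "v \<in> tangent_space M x"
  obtains u where "\<forall>\<^sub>F r in sequentially. u r \<in> tangent_space M (Z r)" "u \<longlonglongrightarrow> v"
proof -
  obtain U K \<Phi>' where "open U" "x \<in> U" "subspace (K :: 'a set)"
    and "continuous_on U \<Phi>'" and bij: "\<And>z. z \<in> U \<Longrightarrow> bij (blinfun_apply (\<Phi>' z))"
    and T: "\<And>z. z \<in> M \<inter> U \<Longrightarrow> tangent_space M z = blinfun_apply (\<Phi>' z) -` K"
    by (rule C1_submanifold_chart[OF assms(1,2)]) (rule that)
  define u where "u r = inv (blinfun_apply (\<Phi>' (Z r))) (\<Phi>' x v)" for r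
  have evU: "\<forall>\<^sub>F r in sequentially. Z r \<in> U"
    using assms(4) \<open>open U\<close> \<open>x \<in> U\<close> by (rule topological_tendstoD)
  then have solves: "\<forall>\<^sub>F r in sequentially. \<Phi>' (Z r) (u r) = \<Phi>' x v"
    by eventually_elim (simp add: u_def bij bij_is_surj surj_f_inv_f)
  show ?thesis
  proof (rule that)
    show "\<forall>\<^sub>F r in sequentially. u r \<in> tangent_space M (Z r)"
      using evU solves by eventually_elim (use T assms(2,3,5) \<open>x \<in> U\<close> in auto)
    have "isCont \<Phi>' x"
      using \<open>continuous_on U \<Phi>'\<close> \<open>open U\<close> \<open>x \<in> U\<close> continuous_on_eq_continuous_at by blast
    then have "(\<lambda>r. \<Phi>' (Z r)) \<longlonglongrightarrow> \<Phi>' x"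
      using assms(4) by (rule isCont_tendsto_compose)
    then show "u \<longlonglongrightarrow> v"
      using bij[OF \<open>x \<in> U\<close>] solves by (intro tendsto_blinfun_solution) (auto simp: bij_is_inj)
  qed
qed

lemma normal_space_limit:
  fixes M :: "'a::euclidean_space set"
  assumes "C1_submanifold M" "x \<in> M" "\<And>r. Z r \<in> M" "Z \<longlonglongrightarrow> x" "E \<longlonglongrightarrow> e"
    and normal: "\<forall>\<^sub>F r in sequentially. E r \<in> normal_space M (Z r)"
  shows "e \<in> normal_space M x"
  unfolding normal_space_def
proof (intro CollectI ballI)
  fix v assume "v \<in> tangent_space M x"
  then obtain u where tangent: "\<forall>\<^sub>F r in sequentially. u r \<in> tangent_space M (Z r)"
    and "u \<longlonglongrightarrow> v"
    using C1_submanifold_tangent_space_approx[OF assms(1-4)] by blast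
  from normal tangent have "\<forall>\<^sub>F r in sequentially. E r \<bullet> u r = 0"
    by eventually_elim (simp add: normal_space_def)
  then have "(\<lambda>r. E r \<bullet> u r) \<longlonglongrightarrow> 0" by (rule tendsto_eventually)
  moreover have "(\<lambda>r. E r \<bullet> u r) \<longlonglongrightarrow> e \<bullet> v"
    using \<open>E \<longlonglongrightarrow> e\<close> \<open>u \<longlonglongrightarrow> v\<close> by (rule tendsto_inner)
  ultimately show "e \<bullet> v = 0" using LIMSEQ_unique by blast
qed

lemma C1_submanifold_nearest_points:
  fixes M :: "'a::euclidean_space set"
  assumes "C1_submanifold M" "x \<in> M" "X \<longlonglongrightarrow> x"
  obtains Z where "\<And>n. Z n \<in> M" "Z \<longlonglongrightarrow> x" "\<forall>\<^sub>F n in sequentially. X n - Z n \<in> normal_space M (Z n)"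
proof -
  obtain \<rho> where "\<rho> > 0" and "closed (M \<inter> cball x \<rho>)"
    using C1_submanifold_locally_closed[OF assms(1,2)] by blast
  define C where "C = M \<inter> cball x \<rho>"
  have "closed C" "x \<in> C" using \<open>closed (M \<inter> cball x \<rho>)\<close> assms(2) \<open>\<rho> > 0\<close> by (simp_all add: C_def)
  define Z where "Z n = closest_point C (X n)" for n
  have "Z n \<in> C" for n
    unfolding Z_def using \<open>closed C\<close> \<open>x \<in> C\<close> by (intro closest_point_in_set) auto
  have Z_nearest: "dist (X n) (Z n) \<le> dist (X n) m" if "m \<in> C" for n m
    unfolding Z_def using \<open>closed C\<close> that by (rule closest_point_le)
  have "Z \<longlonglongrightarrow> x"
  proof (rule LIM_zero_cancel, rule Lim_null_comparison)
    show "\<forall>\<^sub>F n in sequentially. norm (Z n - x) \<le> 2 * norm (X n - x)"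
    proof (intro always_eventually allI)
      fix n
      have "norm (Z n - x) \<le> dist (X n) (Z n) + dist (X n) x"
        by (metis dist_norm dist_triangle2 dist_commute)
      also have "\<dots> \<le> 2 * norm (X n - x)" using Z_nearest[OF \<open>x \<in> C\<close>, of n] by (simp add: dist_norm)
      finally show "norm (Z n - x) \<le> 2 * norm (X n - x)" .
    qed
    show "(\<lambda>n. 2 * norm (X n - x)) \<longlonglongrightarrow> 0"
      using tendsto_mult_right_zero[OF tendsto_norm_zero[OF LIM_zero[OF assms(3)]], of 2] by simp
  qed
  have "\<forall>\<^sub>F n in sequentially. Z n \<in> ball x \<rho>"
    using \<open>Z \<longlonglongrightarrow> x\<close> \<open>\<rho> > 0\<close> by (intro topological_tendstoD) auto
  then have "\<forall>\<^sub>F n in sequentially. X n - Z n \<in> normal_space M (Z n)"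
    by eventually_elim (use Z_nearest in \<open>auto simp: C_def intro: nearest_point_normal[OF open_ball]\<close>)
  moreover have "Z n \<in> M" for n using \<open>Z n \<in> C\<close> by (simp add: C_def)
  ultimately show ?thesis using \<open>Z \<longlonglongrightarrow> x\<close> that by blast
qed

section \<open>Partial smoothness\<close>

lemma proper_fun_not_minf: "proper_fun f \<Longrightarrow> f x \<noteq> -\<infinity>"
  by (simp add: proper_fun_def)

lemma partly_smooth_atD:
  assumes "partly_smooth_at f M x"
  shows "x \<in> M" "\<exists>U. open U \<and> x \<in> U \<and> (\<forall>z\<in>M \<inter> U. subdiff f z \<noteq> {})"
    "\<exists>U ft G. local_C1_extension f M x U ft G" "par (subdiff f x) = normal_space M x"
    "\<And>w X. w \<in> subdiff f x \<Longrightarrow> (\<And>r. X r \<in> M) \<Longrightarrow> X \<longlonglongrightarrow> x \<Longrightarrow>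
       \<exists>W. (\<forall>\<^sub>F r in sequentially. W r \<in> subdiff f (X r)) \<and> W \<longlonglongrightarrow> w"
  using assms unfolding partly_smooth_at_def by (blast | simp)+

lemma partly_smooth_normals_not_separating:
  fixes f :: "'a::euclidean_space \<Rightarrow> ereal"
  assumes "C1_submanifold M" "partly_smooth_at f M xb" "0 \<in> rel_interior (subdiff f xb)"
    and "\<And>r. Z r \<in> M" "Z \<longlonglongrightarrow> xb"
    and "\<And>r. norm (E r) = 1" "\<forall>\<^sub>F r in sequentially. E r \<in> normal_space M (Z r)"
    and "c \<longlonglongrightarrow> 0" and separating: "\<forall>\<^sub>F r in sequentially. \<forall>w \<in> subdiff f (Z r). w \<bullet> E r \<le> c r"
  shows False
proof -
  note ps = partly_smooth_atD[OF assms(2)]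
  have "\<forall>r. E r \<in> sphere 0 1" using assms(6) by simp
  then obtain e \<sigma> where "e \<in> sphere 0 1" "strict_mono \<sigma>" "(E \<circ> \<sigma>) \<longlonglongrightarrow> e"
    by (rule seq_compactE[OF compact_imp_seq_compact[OF compact_sphere]])
  have "(Z \<circ> \<sigma>) \<longlonglongrightarrow> xb" using assms(5) \<open>strict_mono \<sigma>\<close> by (rule LIMSEQ_subseq_LIMSEQ)
  have "e \<in> normal_space M xb"
    using normal_space_limit[OF assms(1) ps(1) _ \<open>(Z \<circ> \<sigma>) \<longlonglongrightarrow> xb\<close> \<open>(E \<circ> \<sigma>) \<longlonglongrightarrow> e\<close>]
      eventually_subseq[OF \<open>strict_mono \<sigma>\<close> assms(7)] assms(4) by simp
  then obtain w where "w \<in> subdiff f xb" "w \<bullet> e > 0"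
    using rel_interior_zero_inner_pos[OF assms(3)] ps(4) \<open>e \<in> sphere 0 1\<close> by force
  then obtain W where W: "\<forall>\<^sub>F r in sequentially. W r \<in> subdiff f (Z (\<sigma> r))" and "W \<longlonglongrightarrow> w"
    using ps(5)[of w "Z \<circ> \<sigma>"] assms(4) \<open>(Z \<circ> \<sigma>) \<longlonglongrightarrow> xb\<close> by auto
  from W eventually_subseq[OF \<open>strict_mono \<sigma>\<close> separating]
  have "\<forall>\<^sub>F r in sequentially. W r \<bullet> (E \<circ> \<sigma>) r \<le> (c \<circ> \<sigma>) r"
    by eventually_elim auto
  moreover have "(\<lambda>r. W r \<bullet> (E \<circ> \<sigma>) r) \<longlonglongrightarrow> w \<bullet> e"
    using \<open>W \<longlonglongrightarrow> w\<close> \<open>(E \<circ> \<sigma>) \<longlonglongrightarrow> e\<close> by (rule tendsto_inner)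
  moreover have "(c \<circ> \<sigma>) \<longlonglongrightarrow> 0" using assms(8) \<open>strict_mono \<sigma>\<close> by (rule LIMSEQ_subseq_LIMSEQ)
  ultimately have "w \<bullet> e \<le> 0" by (intro tendsto_le[OF trivial_limit_sequentially]) 
  with \<open>w \<bullet> e > 0\<close> show False by simp
qed

lemma local_C1_extension_recenter:
  "local_C1_extension f M x U ft G \<Longrightarrow> z \<in> U \<Longrightarrow> local_C1_extension f M z U ft G"
  by (simp add: local_C1_extension_def)

lemma local_C1_extensionD:
  assumes "local_C1_extension f M z U ft G"
  shows "open U" "z \<in> U" "(ft has_derivative (\<lambda>h. G z \<bullet> h)) (at z)"
    "\<And>m. m \<in> M \<inter> U \<Longrightarrow> f m = ereal (ft m)"
  using assms unfolding local_C1_extension_def C1_on_with_grad_def by auto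

lemma local_C1_extension_grad_diff_normal:
  fixes f :: "'a::euclidean_space \<Rightarrow> ereal"
  assumes "local_C1_extension f M z U ft G" "local_C1_extension f M z U' ft' G'" "z \<in> M"
  shows "G' z - G z \<in> normal_space M z"
  unfolding normal_space_def
proof (intro CollectI ballI)
  note ext = local_C1_extensionD[OF assms(1)] and ext' = local_C1_extensionD[OF assms(2)]
  fix v assume v: "v \<in> tangent_space M z"
  have "ft' m - ft m = 0" if "m \<in> M \<inter> (U' \<inter> U)" for m
    using ext(4)[of m] ext'(4)[of m] that by simp
  then have "G' z \<bullet> v - G z \<bullet> v = 0"
    using assms(3) ext ext' has_derivative_diff[OF ext'(3) ext(3)]
    by (intro has_derivative_local_min_on_tangent[OF v, of "U' \<inter> U" "\<lambda>w. ft' w - ft w"]) auto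
  then show "(G' z - G z) \<bullet> v = 0" by (simp add: inner_diff_left)
qed

lemma subdiff_minus_grad_normal:
  fixes f :: "'a::euclidean_space \<Rightarrow> ereal"
  assumes "convex_fun f" "\<And>x. f x \<noteq> -\<infinity>" "local_C1_extension f M z U ft G" "z \<in> M"
    and "y \<in> subdiff f z"
  shows "y - G z \<in> normal_space M z"
  unfolding normal_space_def
proof (intro CollectI ballI)
  fix v assume v: "v \<in> tangent_space M z"
  note U = local_C1_extensionD(1,2)[OF assms(3)]
    and ft = local_C1_extensionD(3)[OF assms(3)] and f_ft = local_C1_extensionD(4)[OF assms(3)]
  have "ft z - y \<bullet> (z - z) \<le> ft m - y \<bullet> (m - z)" if "m \<in> M \<inter> U" for m
  proof -
    have "f z + ereal (y \<bullet> (m - z)) \<le> f m"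
      using assms(5) unfolding subdiff_eq_convex_subdiff[OF assms(1,2)] convex_subdiff_def by blast
    then show ?thesis using f_ft[OF that] f_ft[of z] assms(4) U by simp
  qed
  moreover have "((\<lambda>w. ft w - y \<bullet> (w - z)) has_derivative (\<lambda>h. G z \<bullet> h - y \<bullet> h)) (at z)"
    using ft by (auto intro!: derivative_eq_intros)
  ultimately have "G z \<bullet> v - y \<bullet> v = 0"
    by (rule has_derivative_local_min_on_tangent[OF v U, rotated])
  then show "(y - G z) \<bullet> v = 0" by (simp add: inner_diff_left)
qed

lemma riem_grad_eq_closest_point:
  fixes f :: "'a::euclidean_space \<Rightarrow> ereal"
  assumes "C1_submanifold M" "z \<in> M" "local_C1_extension f M z U ft G"
  shows "riem_grad f M z = closest_point (tangent_space M z) (G z)"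
  unfolding riem_grad_def
proof (rule some_equality)
  show "\<exists>U' ft' G'. local_C1_extension f M z U' ft' G' \<and>
      closest_point (tangent_space M z) (G z) = closest_point (tangent_space M z) (G' z)"
    using assms(3) by blast
  have T: "subspace (tangent_space M z)" using assms(1,2) by (rule C1_submanifold_subspace_tangent_space)
  fix g assume "\<exists>U' ft' G'. local_C1_extension f M z U' ft' G' \<and> g = closest_point (tangent_space M z) (G' z)"
  then obtain U' ft' G' where ext': "local_C1_extension f M z U' ft' G'"
    and g: "g = closest_point (tangent_space M z) (G' z)"
    by blast
  have "(G' z - G z) + (G z - closest_point (tangent_space M z) (G z)) \<in> (tangent_space M z)\<^sup>\<bottom>"
    using local_C1_extension_grad_diff_normal[OF assms(3) ext' assms(2)] closest_point_subspace(2)[OF T]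
    unfolding normal_space_eq_orthogonal_comp by (rule subspace_add[OF subspace_orthogonal_comp])
  then show "g = closest_point (tangent_space M z) (G z)"
    unfolding g by (intro closest_point_subspace_unique[OF T closest_point_subspace(1)[OF T]]) simp
qed

lemma riem_grad_mem_tangent_space:
  fixes f :: "'a::euclidean_space \<Rightarrow> ereal"
  assumes "C1_submanifold M" "z \<in> M" "local_C1_extension f M z U ft G"
  shows "riem_grad f M z \<in> tangent_space M z"
  unfolding riem_grad_eq_closest_point[OF assms]
  using assms(1,2) by (intro closest_point_subspace(1) C1_submanifold_subspace_tangent_space)

lemma subdiff_minus_riem_grad_normal:
  fixes f :: "'a::euclidean_space \<Rightarrow> ereal"
  assumes "convex_fun f" "\<And>x. f x \<noteq> -\<infinity>" "C1_submanifold M" "z \<in> M"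
    and "local_C1_extension f M z U ft G" "y \<in> subdiff f z"
  shows "y - riem_grad f M z \<in> normal_space M z"
proof -
  have "y - G z \<in> normal_space M z"
    using subdiff_minus_grad_normal[OF assms(1,2,5,4,6)] .
  moreover have "G z - riem_grad f M z \<in> normal_space M z"
    unfolding riem_grad_eq_closest_point[OF assms(3-5)] normal_space_eq_orthogonal_comp
    using assms(3,4) by (intro closest_point_subspace(2) C1_submanifold_subspace_tangent_space)
  ultimately have "(y - G z) + (G z - riem_grad f M z) \<in> normal_space M z"
    by (rule subspace_add[OF subspace_normal_space])
  then show ?thesis by simp
qed

lemma partly_smooth_riem_grad_mem_subdiff:
  fixes f :: "'a::euclidean_space \<Rightarrow> ereal"
  assumes "proper_fun f" "convex_fun f" "C1_submanifold M" "partly_smooth_at f M xb"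
    and "0 \<in> rel_interior (subdiff f xb)"
  shows "\<forall>\<^sub>F z in nhds xb. z \<in> M \<longrightarrow> riem_grad f M z \<in> subdiff f z"
proof -
  note no_minf = proper_fun_not_minf[OF assms(1)]
  note ps = partly_smooth_atD[OF assms(4)]
  obtain U\<^sub>1 where "open U\<^sub>1" "xb \<in> U\<^sub>1" and nonempty: "\<And>z. z \<in> M \<inter> U\<^sub>1 \<Longrightarrow> subdiff f z \<noteq> {}"
    using ps(2) by blast
  obtain U ft G where ext: "local_C1_extension f M xb U ft G" using ps(3) by blast
  then have "open U" "xb \<in> U" by (simp_all add: local_C1_extension_def C1_on_with_grad_def)
  show ?thesis
  proof (rule eventually_nhds_by_sequences[of "U\<^sub>1 \<inter> U"])
    fix Z assume ZU: "\<And>n. Z n \<in> U\<^sub>1 \<inter> U" and "Z \<longlonglongrightarrow> xb"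
      and bad: "\<And>n. \<not> (Z n \<in> M \<longrightarrow> riem_grad f M (Z n) \<in> subdiff f (Z n))"
    have ZM: "Z n \<in> M" for n using bad by blast
    have ext_Z: "local_C1_extension f M (Z n) U ft G" for n
      using local_C1_extension_recenter[OF ext] ZU by blast
    define p where "p n = riem_grad f M (Z n)" for n
    define q where "q n = closest_point (subdiff f (Z n)) (p n)" for n
    note closed_convex = closed_and_convex_subdiff[OF assms(2) no_minf]
    have q: "q n \<in> subdiff f (Z n)" for n
      unfolding q_def using closed_convex(1) nonempty ZM ZU by (intro closest_point_in_set) auto
    have "p n \<noteq> q n" for n using q[of n] bad[of n] by (auto simp: p_def)
    have "q n - p n \<in> normal_space M (Z n)" for n
      unfolding p_def using subdiff_minus_riem_grad_normal[OF assms(2) no_minf assms(3) ZM ext_Z q] .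
    then have pq_normal: "p n - q n \<in> normal_space M (Z n)" for n
      using subspace_neg[OF subspace_normal_space] by fastforce
    have pq_orth: "(p n - q n) \<bullet> p n = 0" for n
      using pq_normal riem_grad_mem_tangent_space[OF assms(3) ZM ext_Z]
      by (simp add: p_def normal_space_def)
    have pq_separates: "(p n - q n) \<bullet> w \<le> 0" if "w \<in> subdiff f (Z n)" for n w
      unfolding q_def using closed_convex(2,1) that pq_orth[unfolded q_def]
      by (rule closest_point_residual_inner_nonpos)
    define E where "E n = (p n - q n) /\<^sub>R norm (p n - q n)" for n
    show False
    proof (rule partly_smooth_normals_not_separating[OF assms(3-5) ZM \<open>Z \<longlonglongrightarrow> xb\<close>, where E=E and c="\<lambda>_. 0"])
      show "norm (E n) = 1" for n using \<open>p n \<noteq> q n\<close> by (simp add: E_def)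
      show "\<forall>\<^sub>F n in sequentially. E n \<in> normal_space M (Z n)"
        unfolding E_def by (intro always_eventually allI subspace_scale[OF subspace_normal_space] pq_normal)
      show "\<forall>\<^sub>F n in sequentially. \<forall>w\<in>subdiff f (Z n). w \<bullet> E n \<le> 0"
        using pq_separates
        by (intro always_eventually allI ballI) (simp add: E_def inner_commute mult_nonneg_nonpos)
    qed simp
  qed (use \<open>open U\<^sub>1\<close> \<open>open U\<close> \<open>xb \<in> U\<^sub>1\<close> \<open>xb \<in> U\<close> in auto)
qed

lemma partly_smooth_norm_riem_grad_eq_infdist:
  fixes f :: "'a::euclidean_space \<Rightarrow> ereal"
  assumes "proper_fun f" "convex_fun f" "C1_submanifold M" "partly_smooth_at f M xb"
    and "0 \<in> rel_interior (subdiff f xb)"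
  shows "\<exists>U. open U \<and> xb \<in> U \<and> (\<forall>x\<in>M \<inter> U. norm (riem_grad f M x) = infdist 0 (subdiff f x))"
proof -
  note no_minf = proper_fun_not_minf[OF assms(1)]
  obtain U ft G where ext: "local_C1_extension f M xb U ft G"
    using partly_smooth_atD(3)[OF assms(4)] by blast
  then have "\<forall>\<^sub>F z in nhds xb. z \<in> U"
    by (intro eventually_nhds_in_open) (simp_all add: local_C1_extension_def C1_on_with_grad_def)
  with partly_smooth_riem_grad_mem_subdiff[OF assms]
  have "\<forall>\<^sub>F z in nhds xb. z \<in> M \<longrightarrow> norm (riem_grad f M z) = infdist 0 (subdiff f z)"
  proof eventually_elim
    case (elim z)
    show ?case
    proof
      assume "z \<in> M"
      note ext_z = local_C1_extension_recenter[OF ext elim(2)]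
      show "norm (riem_grad f M z) = infdist 0 (subdiff f z)"
      proof (rule infdist_zero_eq_norm[symmetric])
        show "riem_grad f M z \<in> subdiff f z" using elim(1) \<open>z \<in> M\<close> by blast
        show "(y - riem_grad f M z) \<bullet> riem_grad f M z = 0" if "y \<in> subdiff f z" for y
          using subdiff_minus_riem_grad_normal[OF assms(2) no_minf assms(3) \<open>z \<in> M\<close> ext_z that]
            riem_grad_mem_tangent_space[OF assms(3) \<open>z \<in> M\<close> ext_z]
          by (simp add: normal_space_def)
      qed
    qed
  qed
  then show ?thesis unfolding eventually_nhds by blast
qed

lemma partly_smooth_subdiff_off_manifold:
  fixes f :: "'a::euclidean_space \<Rightarrow> ereal"
  assumes "proper_fun f" "convex_fun f" "C1_submanifold M" "partly_smooth_at f M xb"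
    and "0 \<in> rel_interior (subdiff f xb)"
  shows "\<forall>\<^sub>F (x, y) in nhds (xb, 0). x \<in> M \<or> y \<notin> subdiff f x"
proof (rule eventually_nhds_by_sequences[of UNIV])
  fix XY :: "nat \<Rightarrow> 'a \<times> 'a"
  assume "XY \<longlonglongrightarrow> (xb, 0)" and bad: "\<And>n. \<not> (case XY n of (x, y) \<Rightarrow> x \<in> M \<or> y \<notin> subdiff f x)"
  define X where "X n = fst (XY n)" for n
  define Y where "Y n = snd (XY n)" for n
  have "X \<longlonglongrightarrow> xb" "Y \<longlonglongrightarrow> 0"
    using tendsto_fst[OF \<open>XY \<longlonglongrightarrow> (xb, 0)\<close>] tendsto_snd[OF \<open>XY \<longlonglongrightarrow> (xb, 0)\<close>]
    by (simp_all add: X_def[abs_def] Y_def[abs_def])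
  have XY: "X n \<notin> M" "Y n \<in> convex_subdiff f (X n)" for n
    using bad[of n] subdiff_eq_convex_subdiff[OF assms(2) proper_fun_not_minf[OF assms(1)]]
    by (auto simp: X_def Y_def split: prod.splits)
  obtain Z where ZM: "\<And>n. Z n \<in> M" and "Z \<longlonglongrightarrow> xb"
    and normal: "\<forall>\<^sub>F n in sequentially. X n - Z n \<in> normal_space M (Z n)"
    using C1_submanifold_nearest_points[OF assms(3) partly_smooth_atD(1)[OF assms(4)] \<open>X \<longlonglongrightarrow> xb\<close>]
    by blast
  have "X n \<noteq> Z n" for n using XY(1) ZM by metis
  define D where "D n = (X n - Z n) /\<^sub>R norm (X n - Z n)" for n
  show False
  proof (rule partly_smooth_normals_not_separating[OF assms(3-5) ZM \<open>Z \<longlonglongrightarrow> xb\<close>,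
        where E=D and c="\<lambda>n. Y n \<bullet> D n"])
    show "norm (D n) = 1" for n using \<open>X n \<noteq> Z n\<close> by (simp add: D_def)
    show "\<forall>\<^sub>F n in sequentially. D n \<in> normal_space M (Z n)"
      using normal unfolding D_def by eventually_elim (rule subspace_scale[OF subspace_normal_space])
    show "(\<lambda>n. Y n \<bullet> D n) \<longlonglongrightarrow> 0"
    proof (rule Lim_null_comparison)
      show "\<forall>\<^sub>F n in sequentially. norm (Y n \<bullet> D n) \<le> norm (Y n)"
        using Cauchy_Schwarz_ineq2[of "Y _" "D _"] \<open>\<And>n. norm (D n) = 1\<close>
        by (intro always_eventually allI) simp
    qed (rule tendsto_norm_zero[OF \<open>Y \<longlonglongrightarrow> 0\<close>])
    show "\<forall>\<^sub>F n in sequentially. \<forall>w\<in>subdiff f (Z n). w \<bullet> D n \<le> Y n \<bullet> D n"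
    proof (intro always_eventually allI ballI)
      fix n w assume "w \<in> subdiff f (Z n)"
      then have "(w - Y n) \<bullet> (Z n - X n) \<ge> 0"
        using XY(2) subdiff_eq_convex_subdiff[OF assms(2) proper_fun_not_minf[OF assms(1)]]
        by (intro convex_subdiff_monotone) simp_all
      then have "w \<bullet> (X n - Z n) \<le> Y n \<bullet> (X n - Z n)"
        by (simp add: inner_diff_left inner_diff_right)
      then show "w \<bullet> D n \<le> Y n \<bullet> D n"
        by (simp add: D_def mult_left_mono)
    qed
  qed
qed simp_all

theorem lemma7:
  fixes f :: "'a::euclidean_space \<Rightarrow> ereal" and M :: "'a set" and xb :: 'a
  assumes "proper_fun f" and "convex_fun f" and "closed_fun f"
    and "C1_submanifold M" and "xb \<in> M"
    and "partly_smooth_around f M xb"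
    and "0 \<in> rel_interior (subdiff f xb)"
  shows "(\<exists>U. open U \<and> xb \<in> U \<and>
            (\<forall>x\<in>M \<inter> U. norm (riem_grad f M x) = infdist 0 (subdiff f x)))
       \<and> (\<exists>\<delta>>0. \<exists>\<epsilon>>0. \<forall>x y. norm (x - xb) < \<delta> \<and> x \<notin> M \<and> y \<in> subdiff f x
                                \<longrightarrow> norm y \<ge> \<epsilon>)"
proof
  have "partly_smooth_at f M xb"
    using assms(5,6) unfolding partly_smooth_around_def by blast
  note partly_smooth = assms(1,2,4) this assms(7)
  show "\<exists>U. open U \<and> xb \<in> U \<and> (\<forall>x\<in>M \<inter> U. norm (riem_grad f M x) = infdist 0 (subdiff f x))"
    by (rule partly_smooth_norm_riem_grad_eq_infdist[OF partly_smooth])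
  obtain \<delta> \<epsilon> where "\<delta> > 0" "\<epsilon> > 0"
    and off_M: "\<And>x y. dist x xb < \<delta> \<Longrightarrow> dist y 0 < \<epsilon> \<Longrightarrow> x \<in> M \<or> y \<notin> subdiff f x"
    using eventually_nhds_Pair_metric[OF partly_smooth_subdiff_off_manifold[OF partly_smooth]] by blast
  have "norm y \<ge> \<epsilon>" if "norm (x - xb) < \<delta>" "x \<notin> M" "y \<in> subdiff f x" for x y
    using off_M[of x y] that by (force simp: dist_norm)
  with \<open>\<delta> > 0\<close> \<open>\<epsilon> > 0\<close>
  show "\<exists>\<delta>>0. \<exists>\<epsilon>>0. \<forall>x y. norm (x - xb) < \<delta> \<and> x \<notin> M \<and> y \<in> subdiff f x \<longrightarrow> norm y \<ge> \<epsilon>"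
    by blast
qed

end
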